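(* Let $M$ be a finite $n$-dimensional simplicial complex and $\alpha\in H^1(M;\mathbb{Z}/2)$ nonzero. Then $\operatorname{cut}^\alpha(M)\le (n+1)\operatorname{Vol}(M)$; more precisely, every $(n-1)$-simplex of a subcomplex attaining $\operatorname{cut}^\alpha(M)$ is a face of some $n$-simplex of $M$.
   Context: $\operatorname{Vol}(M)$ is the number of $n$-simplices of $M$. For nonzero $\alpha\in H^1(M;\mathbb{Z}/2)$, $\operatorname{cut}^\alpha(M)$ is the minimal number of $(n-1)$-simplices in a subcomplex $H\subseteq M$ of dimension at most $n-1$ such that $\alpha$ restricts to zero in $H^1(|M|\setminus|H|;\mathbb{Z}/2)$, where $|M|\setminus|H|$ is the difference of geometric realizations. *)

theory Defs
  imports "HOL-Analysis.Analysis" "HOL-Homology.Homology"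
begin

text \<open>A finite simplicial complex on vertex type 'v: a finite family of finite nonempty
vertex sets (simplices), closed under taking nonempty subsets (faces).
A k-simplex is a simplex with k+1 vertices.\<close>

definition simplicial_complex :: "'v set set \<Rightarrow> bool" where
  "simplicial_complex M \<longleftrightarrow>
     (\<forall>s\<in>M. finite s \<and> s \<noteq> {}) \<and> (\<forall>s\<in>M. \<forall>t. t \<subseteq> s \<and> t \<noteq> {} \<longrightarrow> t \<in> M)"

definition finite_simplicial_complex :: "'v set set \<Rightarrow> bool" where
  "finite_simplicial_complex M \<longleftrightarrow> simplicial_complex M \<and> finite M"

definition sc_dim :: "'v set set \<Rightarrow> nat \<Rightarrow> bool" where
  "sc_dim M n \<longleftrightarrow> (\<exists>s\<in>M. card s = n + 1) \<and> (\<forall>s\<in>M. card s \<le> n + 1)"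

definition simplices_of_dim :: "'v set set \<Rightarrow> nat \<Rightarrow> 'v set set" where
  "simplices_of_dim M k = {s\<in>M. card s = k + 1}"

definition Vol :: "'v set set \<Rightarrow> nat \<Rightarrow> nat" where
  "Vol M n = card (simplices_of_dim M n)"

definition subcomplex :: "'v set set \<Rightarrow> 'v set set \<Rightarrow> bool" where
  "subcomplex H M \<longleftrightarrow> H \<subseteq> M \<and> simplicial_complex H"

text \<open>The standard geometric realization inside the product space 'v \<Rightarrow> real
(barycentric coordinates), with the subspace topology of the product topology.\<close>

definition realization :: "'v set set \<Rightarrow> ('v \<Rightarrow> real) set" where
  "realization M = {x. (\<forall>v. 0 \<le> x v) \<and>
      (\<exists>s\<in>M. {v. x v \<noteq> 0} \<subseteq> s \<and> sum x s = 1)}"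

definition realization_top :: "'v set set \<Rightarrow> ('v \<Rightarrow> real) topology" where
  "realization_top M = subtopology (powertop_real UNIV) (realization M)"

text \<open>Z/2 is represented by bool, with addition = exclusive or (\<noteq>).
A singular k-cochain with Z/2 coefficients is a function on singular k-simplices
(we take functions on all maps; only values on singular simplices matter).\<close>

definition Z2_cocycle1 :: "'a topology \<Rightarrow> (((nat \<Rightarrow> real) \<Rightarrow> 'a) \<Rightarrow> bool) \<Rightarrow> bool" where
  "Z2_cocycle1 X c \<longleftrightarrow>
     (\<forall>\<sigma>. singular_simplex 2 X \<sigma> \<longrightarrow>
        ((c (singular_face 2 0 \<sigma>) \<noteq> c (singular_face 2 1 \<sigma>)) \<noteq> c (singular_face 2 2 \<sigma>)) = False)"

definition Z2_coboundary1 :: "'a topology \<Rightarrow> (((nat \<Rightarrow> real) \<Rightarrow> 'a) \<Rightarrow> bool) \<Rightarrow> bool" where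
  "Z2_coboundary1 X c \<longleftrightarrow>
     (\<exists>f :: ((nat \<Rightarrow> real) \<Rightarrow> 'a) \<Rightarrow> bool.
        \<forall>\<tau>. singular_simplex 1 X \<tau> \<longrightarrow>
          c \<tau> = (f (singular_face 1 0 \<tau>) \<noteq> f (singular_face 1 1 \<tau>)))"

text \<open>The class [c] in H^1(X;Z/2) restricts to zero on the subspace U: the singular
1-simplices of the subspace are those of X with image in U, so the restricted cocycle is
just c evaluated on them.\<close>

definition restricts_to_zero :: "'a topology \<Rightarrow> 'a set \<Rightarrow> (((nat \<Rightarrow> real) \<Rightarrow> 'a) \<Rightarrow> bool) \<Rightarrow> bool" where
  "restricts_to_zero X U c \<longleftrightarrow> Z2_coboundary1 (subtopology X U) c"

definition cut_admissible :: "'v set set \<Rightarrow> nat \<Rightarrow> (((nat \<Rightarrow> real) \<Rightarrow> ('v \<Rightarrow> real)) \<Rightarrow> bool) \<Rightarrow> 'v set set \<Rightarrow> bool" where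
  "cut_admissible M n c H \<longleftrightarrow>
     subcomplex H M \<and> (\<forall>s\<in>H. card s \<le> n) \<and>
     restricts_to_zero (realization_top M) (realization M - realization H) c"

definition cut :: "'v set set \<Rightarrow> nat \<Rightarrow> (((nat \<Rightarrow> real) \<Rightarrow> ('v \<Rightarrow> real)) \<Rightarrow> bool) \<Rightarrow> nat" where
  "cut M n c = (LEAST k. \<exists>H. cut_admissible M n c H \<and> k = card (simplices_of_dim H (n - 1)))"

end

theory Submission
  imports Defs
begin

text \<open>The complement of the \<open>(n-1)\<close>-skeleton in \<open>|M|\<close> is the disjoint union of the open
  \<open>n\<close>-simplices. These are open and convex, and a class in \<open>H\<^sup>1\<close> vanishes on a convex set
  (contract it to a point) and on a disjoint union of open sets on each of which it vanishes
  (a singular 1-simplex is connected). So the skeleton cuts \<open>\<alpha>\<close>, and \<open>cut\<^sup>\<alpha>(M)\<close> is attained.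
  If a minimal cutting complex \<open>H\<close> contained an \<open>(n-1)\<close>-simplex \<open>\<sigma>\<close> lying in no \<open>n\<close>-simplex,
  then \<open>\<sigma>\<close> would be maximal in \<open>M\<close>, its open simplex open and convex in \<open>|M|\<close>, and
  \<open>H - {\<sigma>}\<close> would still cut \<open>\<alpha>\<close>. Hence all \<open>(n-1)\<close>-simplices of \<open>H\<close> are among the
  \<open>n + 1\<close> facets of the \<open>n\<close>-simplices of \<open>M\<close>.\<close>

text \<open>Functions \<open>'v \<Rightarrow> real\<close> carry no \<open>real_vector\<close> instance, so convexity is spelled out
  coordinatewise.\<close>

definition pointwise_convex :: "('v \<Rightarrow> real) set \<Rightarrow> bool" where
  "pointwise_convex A \<longleftrightarrow>
     (\<forall>x\<in>A. \<forall>y\<in>A. \<forall>u::real. 0 \<le> u \<and> u \<le> 1 \<longrightarrow> (\<lambda>v. (1 - u) * x v + u * y v) \<in> A)"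

definition segment_simplex :: "('v \<Rightarrow> real) \<Rightarrow> ('v \<Rightarrow> real) \<Rightarrow> (nat \<Rightarrow> real) \<Rightarrow> ('v \<Rightarrow> real)" where
  "segment_simplex p x = restrict (\<lambda>z v. z 0 * p v + z 1 * x v) (standard_simplex 1)"

abbreviation vertex0 :: "nat \<Rightarrow> real" where
  "vertex0 \<equiv> \<lambda>j. if j = 0 then 1 else 0"

lemma simplical_face_vertex0_in_standard_simplex:
  "k \<le> 1 \<Longrightarrow> simplical_face k vertex0 \<in> standard_simplex 1"
  using simplical_face_in_standard_simplex[of 1 k vertex0] by simp

lemma singular_face_1_eq:
  "singular_face 1 k \<tau> = restrict (\<lambda>_. \<tau> (simplical_face k vertex0)) (standard_simplex 0)"
  by (rule ext) (auto simp: singular_face_def standard_simplex_0)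

lemma singular_face_1_vertex0: "singular_face 1 k \<tau> vertex0 = \<tau> (simplical_face k vertex0)"
  by (simp add: singular_face_1_eq standard_simplex_0 del: One_nat_def)

lemma singular_face_segment_simplex:
  "singular_face 1 0 (segment_simplex p x) = restrict (\<lambda>_. x) (standard_simplex 0)"
  "singular_face 1 1 (segment_simplex p x) = restrict (\<lambda>_. p) (standard_simplex 0)"
proof -
  have "simplical_face 0 vertex0 = (\<lambda>j. if j = 1 then 1 else 0)"
       "simplical_face 1 vertex0 = vertex0"
    by (auto simp: simplical_face_def)
  then show "singular_face 1 0 (segment_simplex p x) = restrict (\<lambda>_. x) (standard_simplex 0)"
            "singular_face 1 1 (segment_simplex p x) = restrict (\<lambda>_. p) (standard_simplex 0)"
    using simplical_face_vertex0_in_standard_simplex[of 0] simplical_face_vertex0_in_standard_simplex[of 1]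
    by (simp_all only: singular_face_1_eq) (simp_all add: segment_simplex_def)
qed

lemma singular_simplex_segment_simplex:
  assumes "pointwise_convex A" "p \<in> A" "x \<in> A"
  shows "singular_simplex 1 (subtopology (powertop_real UNIV) A) (segment_simplex p x)"
  unfolding singular_simplex_def
proof
  let ?f = "\<lambda>z v. z 0 * p v + z 1 * x v"
  have "continuous_map (subtopology (powertop_real UNIV) (standard_simplex 1)) (powertop_real UNIV) ?f"
    unfolding continuous_map_componentwise_UNIV
    by (intro allI continuous_map_from_subtopology continuous_map_add continuous_map_real_mult
        continuous_map_const[THEN iffD2] continuous_map_product_projection) auto
  moreover have "?f z \<in> A" if "z \<in> standard_simplex 1" for z
  proof -
    have "z 0 = 1 - z 1" "0 \<le> z 1" "z 1 \<le> 1"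
      using that by (auto simp: standard_simplex_def)
    then show ?thesis
      using assms unfolding pointwise_convex_def by auto
  qed
  ultimately have "continuous_map (subtopology (powertop_real UNIV) (standard_simplex 1))
       (subtopology (powertop_real UNIV) A) ?f"
    by (auto simp add: continuous_map_in_subtopology image_subset_iff)
  then show "continuous_map (subtopology (powertop_real UNIV) (standard_simplex 1))
       (subtopology (powertop_real UNIV) A) (segment_simplex p x)"
    by (rule continuous_map_eq) (simp add: segment_simplex_def)
  show "segment_simplex p x \<in> extensional (standard_simplex 1)"
    by (simp add: segment_simplex_def)
qed

lemma homotopic_id_const_pointwise_convex:
  assumes "pointwise_convex A" "p \<in> A"
  shows "homotopic_with (\<lambda>h. h \<in> {} \<rightarrow> {}) (subtopology (powertop_real UNIV) A)
           (subtopology (powertop_real UNIV) A) id (\<lambda>_. p)"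
  unfolding homotopic_with_def
proof (intro exI conjI)
  let ?X = "prod_topology (top_of_set {0..1::real}) (subtopology (powertop_real UNIV) A)"
  let ?h = "\<lambda>(t::real, x::'a\<Rightarrow>real). (\<lambda>v. (1 - t) * x v + t * p v)"
  have "continuous_map ?X (powertop_real UNIV) ?h"
    unfolding continuous_map_componentwise_UNIV
  proof
    fix v
    have "continuous_map ?X euclideanreal fst"
      by (metis continuous_map_fst continuous_map_into_fulltopology)
    moreover have "continuous_map ?X euclideanreal (\<lambda>y. snd y v)"
      by (rule continuous_map_compose[OF continuous_map_snd, where g="\<lambda>x. x v", simplified o_def])
         (rule continuous_map_from_subtopology, rule continuous_map_product_projection, simp)
    ultimately show "continuous_map ?X euclideanreal (\<lambda>x. ?h x v)"
      by (simp add: case_prod_beta)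
         (intro continuous_map_add continuous_map_real_mult continuous_map_diff
           continuous_map_const[THEN iffD2]; simp)
  qed
  moreover have "?h ` topspace ?X \<subseteq> A"
    using assms by (auto simp: pointwise_convex_def)
  ultimately show "continuous_map ?X (subtopology (powertop_real UNIV) A) ?h"
    by (auto simp add: continuous_map_in_subtopology image_subset_iff)
qed auto

text \<open>An integer lift of the pairing of the \<open>\<int>/2\<close>-cochain \<open>c\<close> with a chain; only its parity
  matters.\<close>

definition cochain_count :: "(((nat \<Rightarrow> real) \<Rightarrow> 'a) \<Rightarrow> bool) \<Rightarrow> 'a chain \<Rightarrow> int" where
  "cochain_count c ch = poly_mapping.lookup (frag_extend (\<lambda>\<sigma>. if c \<sigma> then frag_of () else 0) ch) ()"

lemma cochain_count_simps [simp]: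
  "cochain_count c 0 = 0"
  "cochain_count c (frag_of \<sigma>) = (if c \<sigma> then 1 else 0)"
  "cochain_count c (a + b) = cochain_count c a + cochain_count c b"
  "cochain_count c (a - b) = cochain_count c a - cochain_count c b"
  by (simp_all add: cochain_count_def frag_extend_add frag_extend_diff lookup_add lookup_minus)

lemma chain_boundary_1_of:
  "chain_boundary 1 (frag_of \<sigma>) = frag_of (singular_face 1 0 \<sigma>) - frag_of (singular_face 1 1 \<sigma>)"
  by (simp add: chain_boundary_of frag_cmul_minus_one)

lemma chain_boundary_2_of:
  "chain_boundary 2 (frag_of \<sigma>) =
     frag_of (singular_face 2 0 \<sigma>) - frag_of (singular_face 2 1 \<sigma>) + frag_of (singular_face 2 2 \<sigma>)"
  by (simp add: chain_boundary_of numeral_2_eq_2 frag_cmul_minus_one)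

lemma even_cochain_count_boundary:
  assumes "Z2_cocycle1 X c" "singular_chain 2 X D"
  shows "even (cochain_count c (chain_boundary 2 D))"
proof -
  have "Poly_Mapping.keys D \<subseteq> singular_simplex_set 2 X"
    using assms(2) by (simp add: singular_chain_def)
  then show ?thesis
  proof (induction rule: frag_induction)
    case (one \<sigma>)
    then have "((c (singular_face 2 0 \<sigma>) \<noteq> c (singular_face 2 1 \<sigma>)) \<noteq> c (singular_face 2 2 \<sigma>)) = False"
      using assms(1) by (simp add: Z2_cocycle1_def)
    then show ?case by (simp add: chain_boundary_2_of) blast
  qed (simp_all add: chain_boundary_diff)
qed

lemma Z2_cocycle1_subtopology: "Z2_cocycle1 X c \<Longrightarrow> Z2_cocycle1 (subtopology X S) c"
  unfolding Z2_cocycle1_def by (simp add: singular_simplex_subtopology)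

lemma Z2_cocycle1_constant_simplex:
  assumes "Z2_cocycle1 X c" "p \<in> topspace X"
  shows "\<not> c (restrict (\<lambda>_. p) (standard_simplex 1))"
proof -
  define K where "K = restrict (\<lambda>_. p) (standard_simplex 2)"
  have "singular_simplex 2 X K"
    unfolding singular_simplex_def K_def
    by (auto intro!: continuous_map_eq[of _ _ "\<lambda>_. p"] simp: assms(2))
  moreover have "singular_face 2 k K = restrict (\<lambda>_. p) (standard_simplex 1)" if "k \<le> 2" for k
    using simplical_face_in_standard_simplex[of 2 k] that
    by (auto simp: K_def singular_face_def)
  ultimately show ?thesis
    using assms(1) unfolding Z2_cocycle1_def by fastforce
qed

text \<open>The 1-cycle \<open>\<tau> - [p,b] + [p,a]\<close> is homologous to a constant simplex by the
  straight-line contraction to \<open>p\<close>, on which the cocycle vanishes.\<close>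

lemma Z2_cocycle1_pointwise_convex_triangle:
  fixes A :: "('v \<Rightarrow> real) set"
  defines "Y \<equiv> subtopology (powertop_real UNIV) A"
  assumes A: "pointwise_convex A" and p: "p \<in> A" and c: "Z2_cocycle1 Y c"
    and \<tau>: "singular_simplex 1 Y \<tau>"
  shows "c \<tau> = (c (segment_simplex p (\<tau> (simplical_face 0 vertex0)))
               \<noteq> c (segment_simplex p (\<tau> (simplical_face 1 vertex0))))"
proof -
  define a where "a = \<tau> (simplical_face 1 vertex0)"
  define b where "b = \<tau> (simplical_face 0 vertex0)"
  have ab: "a \<in> A" "b \<in> A"
    using \<tau> simplical_face_vertex0_in_standard_simplex[of 0] simplical_face_vertex0_in_standard_simplex[of 1]
    unfolding a_def b_def Y_def singular_simplex_def continuous_map_def by auto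
  have sa: "singular_simplex 1 Y (segment_simplex p a)" and sb: "singular_simplex 1 Y (segment_simplex p b)"
    unfolding Y_def using singular_simplex_segment_simplex[OF A p] ab by auto
  define z where "z = frag_of \<tau> - frag_of (segment_simplex p b) + frag_of (segment_simplex p a)"
  have "singular_chain 1 Y z"
    unfolding z_def using \<tau> sa sb
    by (intro singular_chain_add singular_chain_diff) (auto simp: singular_chain_of)
  moreover have "chain_boundary 1 z = 0"
    unfolding z_def chain_boundary_add chain_boundary_diff chain_boundary_1_of
      singular_face_segment_simplex singular_face_1_eq[of _ \<tau>] a_def[symmetric] b_def[symmetric]
    by simp
  ultimately have "singular_relcycle 1 Y {} z"
    by (simp add: singular_cycle)
  then have "homologous_rel 1 Y {} (chain_map 1 id z) (chain_map 1 (\<lambda>_. p) z)"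
    unfolding Y_def
    by (rule homotopic_imp_homologous_rel_chain_maps[OF homotopic_id_const_pointwise_convex[OF A p]])
  moreover have "chain_map 1 id z = z"
  proof -
    have "restrict \<sigma> (standard_simplex 1) = \<sigma>" if "singular_simplex 1 Y \<sigma>" for \<sigma>
      using that by (simp add: singular_simplex_def extensional_restrict)
    then show ?thesis
      unfolding z_def using \<tau> sa sb by (simp add: chain_map_add chain_map_diff del: One_nat_def)
  qed
  moreover have "chain_map 1 (\<lambda>_. p) z = frag_of (restrict (\<lambda>_. p) (standard_simplex 1))"
    unfolding z_def by (simp add: chain_map_add chain_map_diff simplex_map_def o_def)
  ultimately obtain D where D: "singular_chain 2 Y D"
    "chain_boundary 2 D = z - frag_of (restrict (\<lambda>_. p) (standard_simplex 1))"
    unfolding homologous_rel_def singular_boundary by (metis one_add_one plus_1_eq_Suc)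
  have "\<not> c (restrict (\<lambda>_. p) (standard_simplex 1))"
    using Z2_cocycle1_constant_simplex[OF c] p by (simp add: Y_def)
  then have "even ((if c \<tau> then 1 else 0) - (if c (segment_simplex p b) then 1 else 0)
                   + (if c (segment_simplex p a) then 1 else (0::int)))"
    using even_cochain_count_boundary[OF c D(1)] D(2) by (simp add: z_def)
  then show ?thesis
    unfolding a_def[symmetric] b_def[symmetric] by (auto split: if_splits)
qed

lemma Z2_coboundary1_pointwise_convex:
  assumes A: "pointwise_convex A"
    and c: "Z2_cocycle1 (subtopology (powertop_real UNIV) A) c"
  shows "Z2_coboundary1 (subtopology (powertop_real UNIV) A) c"
proof (cases "A = {}")
  case True
  then show ?thesis by (simp add: Z2_coboundary1_def singular_simplex_empty)
next
  case False
  then obtain p where "p \<in> A" by auto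
  then show ?thesis
    unfolding Z2_coboundary1_def
    using Z2_cocycle1_pointwise_convex_triangle[OF A _ c]
    by (intro exI[of _ "\<lambda>g. c (segment_simplex p (g vertex0))"]) (simp add: singular_face_1_vertex0[simplified])
qed

lemma singular_simplex_1_in_open_partition:
  assumes U: "U \<subseteq> topspace X"
    and disj: "\<And>P Q. P \<in> \<P> \<Longrightarrow> Q \<in> \<P> \<Longrightarrow> P \<noteq> Q \<Longrightarrow> P \<inter> Q = {}"
    and un: "\<Union>\<P> = U"
    and op: "\<And>P. P \<in> \<P> \<Longrightarrow> openin (subtopology X U) P"
    and P: "P \<in> \<P>" "\<tau> (simplical_face 0 vertex0) \<in> P"
    and \<tau>: "singular_simplex 1 (subtopology X U) \<tau>"
  shows "singular_simplex 1 (subtopology X P) \<tau>"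
proof -
  let ?K = "\<tau> ` standard_simplex 1"
  have "connectedin (subtopology X U) ?K"
    using \<tau> unfolding singular_simplex_def
    by (intro connectedin_continuous_map_image)
       (auto simp: connectedin_subtopology connectedin_standard_simplex)
  moreover have "closedin (subtopology X U) P"
  proof -
    have "topspace (subtopology X U) - P = \<Union>(\<P> - {P})"
      using U un disj[OF P(1)] P(1) by auto
    moreover have "openin (subtopology X U) (\<Union>(\<P> - {P}))"
      using op by (intro openin_Union) auto
    ultimately show ?thesis
      using openin_subset[OF op[OF P(1)]] by (simp add: closedin_def)
  qed
  ultimately have "?K \<subseteq> P \<or> disjnt ?K P"
    using connectedin_clopen_cases op[OF P(1)] by blast
  moreover have "\<not> disjnt ?K P"
    using P(2) simplical_face_vertex0_in_standard_simplex[of 0] by (auto simp: disjnt_def)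
  ultimately show ?thesis
    using \<tau> by (simp add: singular_simplex_subtopology)
qed

text \<open>A 1-simplex is connected, so it lies in a single piece of the open partition, and the
  primitives on the pieces can be combined into one.\<close>

lemma Z2_coboundary1_open_partition:
  fixes X :: "'a topology"
  assumes U: "U \<subseteq> topspace X"
    and disj: "\<And>P Q. P \<in> \<P> \<Longrightarrow> Q \<in> \<P> \<Longrightarrow> P \<noteq> Q \<Longrightarrow> P \<inter> Q = {}"
    and un: "\<Union>\<P> = U"
    and op: "\<And>P. P \<in> \<P> \<Longrightarrow> openin (subtopology X U) P"
    and cob: "\<And>P. P \<in> \<P> \<Longrightarrow> Z2_coboundary1 (subtopology X P) c"
  shows "Z2_coboundary1 (subtopology X U) c"
proof -
  define F where "F P = (SOME f :: ((nat \<Rightarrow> real) \<Rightarrow> 'a) \<Rightarrow> bool. \<forall>\<tau>.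
     singular_simplex 1 (subtopology X P) \<tau> \<longrightarrow> c \<tau> = (f (singular_face 1 0 \<tau>) \<noteq> f (singular_face 1 1 \<tau>)))"
    for P
  have F: "c \<tau> = (F P (singular_face 1 0 \<tau>) \<noteq> F P (singular_face 1 1 \<tau>))"
    if "P \<in> \<P>" "singular_simplex 1 (subtopology X P) \<tau>" for P \<tau>
    using someI_ex[OF cob[OF that(1), unfolded Z2_coboundary1_def]] that(2) unfolding F_def by blast
  define piece where "piece g = (THE P. P \<in> \<P> \<and> g vertex0 \<in> P)" for g :: "(nat \<Rightarrow> real) \<Rightarrow> 'a"
  have piece: "piece g = P" if "P \<in> \<P>" "g vertex0 \<in> P" for P g
    unfolding piece_def using that disj by (metis (no_types, lifting) IntI empty_iff the_equality)
  define f where "f g = F (piece g) g" for g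
  have "c \<tau> = (f (singular_face 1 0 \<tau>) \<noteq> f (singular_face 1 1 \<tau>))"
    if \<tau>: "singular_simplex 1 (subtopology X U) \<tau>" for \<tau>
  proof -
    have "\<tau> (simplical_face 0 vertex0) \<in> topspace (subtopology X U)"
      using \<tau> simplical_face_vertex0_in_standard_simplex[of 0]
      unfolding singular_simplex_def continuous_map_def by auto
    then obtain P where P: "P \<in> \<P>" "\<tau> (simplical_face 0 vertex0) \<in> P"
      using un by auto
    have \<tau>P: "singular_simplex 1 (subtopology X P) \<tau>"
      by (rule singular_simplex_1_in_open_partition[OF U disj un op P \<tau>])
    have "singular_face 1 k \<tau> vertex0 \<in> P" if "k \<le> 1" for k
      using \<tau>P simplical_face_vertex0_in_standard_simplex[OF that]
      unfolding singular_face_1_vertex0 singular_simplex_def continuous_map_def by auto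
    then have "f (singular_face 1 k \<tau>) = F P (singular_face 1 k \<tau>)" if "k \<le> 1" for k
      unfolding f_def using piece[OF P(1)] that by simp
    then show ?thesis
      using F[OF P(1) \<tau>P] by simp
  qed
  then show ?thesis
    unfolding Z2_coboundary1_def by blast
qed

lemma realization_iff_support:
  assumes "simplicial_complex K"
  shows "x \<in> realization K \<longleftrightarrow> (\<forall>v. 0 \<le> x v) \<and> {v. x v \<noteq> 0} \<in> K \<and> sum x {v. x v \<noteq> 0} = 1"
proof
  assume "x \<in> realization K"
  then obtain s where s: "s \<in> K" "{v. x v \<noteq> 0} \<subseteq> s" "sum x s = 1" and nonneg: "\<forall>v. 0 \<le> x v"
    unfolding realization_def by auto
  have "finite s"
    using assms s(1) unfolding simplicial_complex_def by auto
  then have "sum x s = sum x {v. x v \<noteq> 0}"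
    using s(2) by (intro sum.mono_neutral_right) auto
  then have sum_support: "sum x {v. x v \<noteq> 0} = 1"
    using s(3) by simp
  have "{v. x v \<noteq> 0} \<noteq> {}"
  proof
    assume "{v. x v \<noteq> 0} = {}"
    with sum_support show False by (simp only: sum.empty)
  qed
  then have "{v. x v \<noteq> 0} \<in> K"
    using assms s(1,2) unfolding simplicial_complex_def by blast
  with nonneg sum_support show "(\<forall>v. 0 \<le> x v) \<and> {v. x v \<noteq> 0} \<in> K \<and> sum x {v. x v \<noteq> 0} = 1"
    by simp
qed (auto simp: realization_def)

lemma realization_diff_iff:
  assumes "simplicial_complex M" "simplicial_complex H"
  shows "x \<in> realization M - realization H \<longleftrightarrow> x \<in> realization M \<and> {v. x v \<noteq> 0} \<notin> H"
  using realization_iff_support[OF assms(1), of x] realization_iff_support[OF assms(2), of x] by blast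

definition open_simplex :: "'v set set \<Rightarrow> 'v set \<Rightarrow> ('v \<Rightarrow> real) set" where
  "open_simplex M t = {x \<in> realization M. {v. x v \<noteq> 0} = t}"

lemma open_simplex_subset_realization_diff:
  assumes "simplicial_complex M" "simplicial_complex H" "t \<notin> H"
  shows "open_simplex M t \<subseteq> realization M - realization H"
  using realization_diff_iff[OF assms(1,2)] assms(3) by (auto simp: open_simplex_def)

lemma pointwise_convex_open_simplex:
  assumes M: "simplicial_complex M"
  shows "pointwise_convex (open_simplex M t)"
  unfolding pointwise_convex_def
proof (intro ballI allI impI)
  fix x y and u :: real
  assume x: "x \<in> open_simplex M t" and y: "y \<in> open_simplex M t" and u: "0 \<le> u \<and> u \<le> 1"
  let ?z = "\<lambda>v. (1 - u) * x v + u * y v"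
  have x': "(\<forall>v. 0 \<le> x v) \<and> t \<in> M \<and> sum x t = 1" "{v. x v \<noteq> 0} = t"
    using x realization_iff_support[OF M, of x] by (auto simp: open_simplex_def)
  have y': "(\<forall>v. 0 \<le> y v) \<and> t \<in> M \<and> sum y t = 1" "{v. y v \<noteq> 0} = t"
    using y realization_iff_support[OF M, of y] by (auto simp: open_simplex_def)
  show "?z \<in> open_simplex M t"
  proof (cases "u = 0 \<or> u = 1")
    case True
    then show ?thesis using x y by auto
  next
    case False
    with u have "0 < u" "0 < 1 - u" by auto
    have "?z v \<noteq> 0 \<longleftrightarrow> x v \<noteq> 0 \<or> y v \<noteq> 0" for v
    proof -
      have "0 \<le> (1 - u) * x v" "0 \<le> u * y v"
        using x'(1) y'(1) u by auto
      moreover have "(1 - u) * x v = 0 \<longleftrightarrow> x v = 0" "u * y v = 0 \<longleftrightarrow> y v = 0"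
        using \<open>0 < u\<close> \<open>0 < 1 - u\<close> by auto
      ultimately show ?thesis by linarith
    qed
    then have "{v. ?z v \<noteq> 0} = t"
      using x'(2) y'(2) by auto
    moreover have "sum ?z t = 1"
      using x'(1) y'(1) by (simp add: sum.distrib sum_distrib_left[symmetric])
    moreover have "\<forall>v. 0 \<le> ?z v"
      using x'(1) y'(1) u by simp
    ultimately show ?thesis
      using x'(1) realization_iff_support[OF M, of ?z] by (simp add: open_simplex_def)
  qed
qed

lemma openin_powertop_real_coordinate:
  "open B \<Longrightarrow> openin (powertop_real UNIV) {x :: 'v \<Rightarrow> real. x v \<in> B}"
  using openin_continuous_map_preimage[OF continuous_map_product_projection[of v UNIV "\<lambda>_. euclideanreal"],
      of B]
  by simp

lemma openin_powertop_real_positive: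
  "finite t \<Longrightarrow> openin (powertop_real UNIV) {x :: 'v \<Rightarrow> real. \<forall>v\<in>t. 0 < x v}"
proof (induction t rule: finite_induct)
  case (insert a t)
  have "{x :: 'v \<Rightarrow> real. \<forall>v\<in>insert a t. 0 < x v} = {x. x a \<in> {0<..}} \<inter> {x. \<forall>v\<in>t. 0 < x v}"
    by auto
  then show ?case
    using insert openin_powertop_real_coordinate[of "{0<..}" a] by (simp add: openin_Int)
next
  case empty
  show ?case
    using openin_topspace[of "powertop_real (UNIV :: 'v set)"] by simp
qed

lemma openin_powertop_real_nonzero:
  "openin (powertop_real UNIV) {x :: 'v \<Rightarrow> real. \<exists>v\<in>S. x v \<noteq> 0}"
proof -
  have "{x :: 'v \<Rightarrow> real. \<exists>v\<in>S. x v \<noteq> 0} = (\<Union>v\<in>S. {x. x v \<in> -{0}})"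
    by auto
  then show ?thesis
    using openin_powertop_real_coordinate[of "-{0}"] by (auto simp: open_Compl intro!: openin_Union)
qed

lemma openin_open_simplex:
  fixes M :: "'v set set"
  assumes M: "simplicial_complex M" and t: "t \<in> M"
    and maximal: "\<And>s. s \<in> M \<Longrightarrow> t \<subseteq> s \<Longrightarrow> s = t"
    and U: "open_simplex M t \<subseteq> U" "U \<subseteq> realization M"
  shows "openin (subtopology (realization_top M) U) (open_simplex M t)"
proof -
  define W where "W = {x :: 'v \<Rightarrow> real. \<forall>v\<in>t. 0 < x v}"
  have "finite t"
    using M t unfolding simplicial_complex_def by auto
  then have "openin (realization_top M) (realization M \<inter> W)"
    unfolding realization_top_def openin_subtopology
    by (intro exI[of _ W] conjI) (simp_all add: W_def openin_powertop_real_positive Int_commute)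
  moreover have "open_simplex M t = realization M \<inter> W \<inter> U"
  proof
    show "open_simplex M t \<subseteq> realization M \<inter> W \<inter> U"
    proof
      fix x assume x: "x \<in> open_simplex M t"
      then have "x \<in> realization M" and support: "{v. x v \<noteq> 0} = t"
        unfolding open_simplex_def by auto
      then have "\<forall>v. 0 \<le> x v"
        using realization_iff_support[OF M] by blast
      then have "x \<in> W"
        unfolding W_def using support by (force simp: order.order_iff_strict)
      then show "x \<in> realization M \<inter> W \<inter> U"
        using \<open>x \<in> realization M\<close> x U by blast
    qed
    show "realization M \<inter> W \<inter> U \<subseteq> open_simplex M t"
    proof
      fix x assume x: "x \<in> realization M \<inter> W \<inter> U"
      then have "{v. x v \<noteq> 0} \<in> M"
        using realization_iff_support[OF M] by blast
      moreover have "t \<subseteq> {v. x v \<noteq> 0}"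
        using x unfolding W_def by force
      ultimately show "x \<in> open_simplex M t"
        using x maximal unfolding open_simplex_def by blast
    qed
  qed
  ultimately show ?thesis
    unfolding openin_subtopology by blast
qed

lemma Z2_coboundary1_open_simplex:
  assumes M: "simplicial_complex M" and c: "Z2_cocycle1 (realization_top M) c"
  shows "Z2_coboundary1 (subtopology (realization_top M) (open_simplex M t)) c"
proof -
  have "subtopology (realization_top M) (open_simplex M t) =
        subtopology (powertop_real UNIV) (open_simplex M t)"
    unfolding realization_top_def subtopology_subtopology
    by (simp add: Int_absorb1 open_simplex_def subset_iff)
  then show ?thesis
    using Z2_coboundary1_pointwise_convex[OF pointwise_convex_open_simplex[OF M]]
      Z2_cocycle1_subtopology[OF c] by metis
qed

lemma simplicial_complex_skeleton:
  assumes "simplicial_complex M"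
  shows "simplicial_complex {s \<in> M. card s \<le> k}"
  unfolding simplicial_complex_def
proof (intro conjI ballI allI impI)
  fix s t assume s: "s \<in> {s \<in> M. card s \<le> k}" and t: "t \<subseteq> s \<and> t \<noteq> {}"
  then have "finite s" "t \<in> M"
    using assms unfolding simplicial_complex_def by blast+
  then show "t \<in> {s \<in> M. card s \<le> k}"
    using s t card_mono[of s t] by simp
qed (use assms in \<open>auto simp: simplicial_complex_def\<close>)

lemma simplicial_complex_remove_maximal:
  assumes "simplicial_complex H" "\<And>s. s \<in> H \<Longrightarrow> \<sigma> \<subseteq> s \<Longrightarrow> s = \<sigma>"
  shows "simplicial_complex (H - {\<sigma>})"
  using assms unfolding simplicial_complex_def by blast

lemma maximal_if_card_eq_bound:
  assumes "simplicial_complex M" "\<And>s. s \<in> M \<Longrightarrow> card s \<le> m"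
    and "t \<in> M" "card t = m" "s \<in> M" "t \<subseteq> s"
  shows "s = t"
proof -
  have "finite s"
    using assms(1,5) by (simp add: simplicial_complex_def)
  then show ?thesis
    using assms(2-6) card_mono[of s t] card_subset_eq[of s t] by (metis le_antisym)
qed

lemma realization_diff_skeleton:
  assumes M: "simplicial_complex M" and dim: "sc_dim M n"
  shows "realization M - realization {s \<in> M. card s \<le> n} = (\<Union>t\<in>simplices_of_dim M n. open_simplex M t)"
proof (intro equalityI subsetI)
  fix x assume x: "x \<in> realization M - realization {s \<in> M. card s \<le> n}"
  then have "x \<in> realization M" "{v. x v \<noteq> 0} \<notin> {s \<in> M. card s \<le> n}"
    using realization_diff_iff[OF M simplicial_complex_skeleton[OF M]] by blast+
  moreover have "{v. x v \<noteq> 0} \<in> M"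
    using x realization_iff_support[OF M] by blast
  ultimately have "{v. x v \<noteq> 0} \<in> simplices_of_dim M n" "x \<in> open_simplex M {v. x v \<noteq> 0}"
    using dim by (auto simp: sc_dim_def simplices_of_dim_def open_simplex_def)
  then show "x \<in> (\<Union>t\<in>simplices_of_dim M n. open_simplex M t)"
    by blast
next
  fix x assume "x \<in> (\<Union>t\<in>simplices_of_dim M n. open_simplex M t)"
  then obtain t where t: "t \<in> simplices_of_dim M n" "x \<in> open_simplex M t"
    by blast
  then have "t \<notin> {s \<in> M. card s \<le> n}"
    by (simp add: simplices_of_dim_def)
  then show "x \<in> realization M - realization {s \<in> M. card s \<le> n}"
    using open_simplex_subset_realization_diff[OF M simplicial_complex_skeleton[OF M]] t(2) by blast
qed

lemma open_simplex_disjoint: "t \<noteq> t' \<Longrightarrow> open_simplex M t \<inter> open_simplex M t' = {}"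
  unfolding open_simplex_def by blast

lemma cut_admissible_skeleton:
  assumes M: "simplicial_complex M" and dim: "sc_dim M n"
    and c: "Z2_cocycle1 (realization_top M) c"
  shows "cut_admissible M n c {s \<in> M. card s \<le> n}"
proof -
  let ?U = "realization M - realization {s \<in> M. card s \<le> n}"
  have maximal: "s = t" if "t \<in> simplices_of_dim M n" "s \<in> M" "t \<subseteq> s" for s t
    using that maximal_if_card_eq_bound[OF M, of "n + 1"] dim
    by (auto simp: sc_dim_def simplices_of_dim_def)
  have "Z2_coboundary1 (subtopology (realization_top M) ?U) c"
  proof (rule Z2_coboundary1_open_partition[where \<P> = "open_simplex M ` simplices_of_dim M n"])
    show "?U \<subseteq> topspace (realization_top M)"
      by (auto simp: realization_top_def)
    show "\<Union>(open_simplex M ` simplices_of_dim M n) = ?U"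
      using realization_diff_skeleton[OF M dim] by simp
    fix P assume "P \<in> open_simplex M ` simplices_of_dim M n"
    then obtain t where t: "t \<in> simplices_of_dim M n" and P: "P = open_simplex M t"
      by blast
    show "Z2_coboundary1 (subtopology (realization_top M) P) c"
      unfolding P using Z2_coboundary1_open_simplex[OF M c] .
    have "open_simplex M t \<subseteq> ?U"
      using realization_diff_skeleton[OF M dim] t by blast
    then show "openin (subtopology (realization_top M) ?U) P"
      unfolding P using t maximal
      by (intro openin_open_simplex[OF M]) (auto simp: simplices_of_dim_def)
  next
    fix P Q
    assume "P \<in> open_simplex M ` simplices_of_dim M n" "Q \<in> open_simplex M ` simplices_of_dim M n" "P \<noteq> Q"
    then obtain t t' where "P = open_simplex M t" "Q = open_simplex M t'" "t \<noteq> t'"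
      by blast
    then show "P \<inter> Q = {}"
      using open_simplex_disjoint by simp
  qed
  then show ?thesis
    using simplicial_complex_skeleton[OF M]
    unfolding cut_admissible_def subcomplex_def restricts_to_zero_def by auto
qed

lemma realization_diff_remove:
  assumes M: "simplicial_complex M" and H: "simplicial_complex H"
    and H': "simplicial_complex (H - {\<sigma>})" and \<sigma>: "\<sigma> \<in> H"
  shows "realization M - realization (H - {\<sigma>}) = (realization M - realization H) \<union> open_simplex M \<sigma>"
proof -
  have "x \<in> realization M - realization (H - {\<sigma>}) \<longleftrightarrow>
        x \<in> realization M - realization H \<or> x \<in> open_simplex M \<sigma>" for x
    using realization_diff_iff[OF M H, of x] realization_diff_iff[OF M H', of x] \<sigma>
    by (auto simp: open_simplex_def)
  then show ?thesis
    by blast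
qed

lemma openin_realization_diff_remove:
  assumes M: "simplicial_complex M" and H: "simplicial_complex H"
    and H': "simplicial_complex (H - {\<sigma>})" and \<sigma>: "\<sigma> \<in> H"
  shows "openin (subtopology (realization_top M) (realization M - realization (H - {\<sigma>})))
           (realization M - realization H)"
proof -
  define V where "V = {x :: 'a \<Rightarrow> real. \<exists>v\<in>-\<sigma>. x v \<noteq> 0}"
  have "openin (realization_top M) (realization M \<inter> V)"
    unfolding realization_top_def openin_subtopology
    by (intro exI[of _ V] conjI) (simp_all add: V_def openin_powertop_real_nonzero Int_commute)
  moreover have "realization M - realization H =
                 (realization M \<inter> V) \<inter> (realization M - realization (H - {\<sigma>}))"
  proof (intro equalityI subsetI)
    fix x assume x: "x \<in> realization M - realization H"
    then have xM: "x \<in> realization M" and "{v. x v \<noteq> 0} \<notin> H"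
      using realization_diff_iff[OF M H] by blast+
    moreover have "{v. x v \<noteq> 0} \<noteq> {}"
      using xM realization_iff_support[OF M] M unfolding simplicial_complex_def by blast
    ultimately have "\<not> {v. x v \<noteq> 0} \<subseteq> \<sigma>"
      using H \<sigma> unfolding simplicial_complex_def by blast
    then have "x \<in> V"
      unfolding V_def by auto
    moreover have "x \<in> realization M - realization (H - {\<sigma>})"
      using x realization_diff_remove[OF assms] by blast
    ultimately show "x \<in> (realization M \<inter> V) \<inter> (realization M - realization (H - {\<sigma>}))"
      using xM by blast
  next
    fix x assume x: "x \<in> (realization M \<inter> V) \<inter> (realization M - realization (H - {\<sigma>}))"
    then have "{v. x v \<noteq> 0} \<noteq> \<sigma>"
      unfolding V_def by auto
    then show "x \<in> realization M - realization H"
      using x realization_diff_iff[OF M H] realization_diff_iff[OF M H'] by blast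
  qed
  ultimately show ?thesis
    unfolding openin_subtopology by blast
qed

text \<open>The open simplex of a free face \<open>\<sigma>\<close> is open in \<open>|M|\<close>, so adding it to the
  complement of \<open>|H|\<close> keeps the cocycle a coboundary.\<close>

lemma cut_admissible_remove_free_face:
  assumes M: "simplicial_complex M" and dim: "sc_dim M n"
    and c: "Z2_cocycle1 (realization_top M) c"
    and adm: "cut_admissible M n c H" and \<sigma>: "\<sigma> \<in> H" "card \<sigma> = n"
    and free: "\<not> (\<exists>t\<in>simplices_of_dim M n. \<sigma> \<subseteq> t)"
  shows "cut_admissible M n c (H - {\<sigma>})"
proof -
  have HM: "H \<subseteq> M" and H: "simplicial_complex H" and H_dim: "\<forall>s\<in>H. card s \<le> n"
    and cob: "Z2_coboundary1 (subtopology (realization_top M) (realization M - realization H)) c"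
    using adm unfolding cut_admissible_def subcomplex_def restricts_to_zero_def by auto
  have maximal: "s = \<sigma>" if "s \<in> M" "\<sigma> \<subseteq> s" for s
  proof (rule ccontr)
    assume "s \<noteq> \<sigma>"
    moreover have "finite s"
      using that M by (simp add: simplicial_complex_def)
    ultimately have "card \<sigma> < card s"
      using psubset_card_mono that(2) by blast
    then have "s \<in> simplices_of_dim M n"
      using that dim \<sigma>(2) by (simp add: simplices_of_dim_def sc_dim_def le_antisym Suc_le_eq)
    then show False
      using free that(2) by blast
  qed
  have H': "simplicial_complex (H - {\<sigma>})"
    using simplicial_complex_remove_maximal[OF H] maximal HM by blast
  let ?U = "realization M - realization H"
  let ?U' = "realization M - realization (H - {\<sigma>})"
  have "Z2_coboundary1 (subtopology (realization_top M) ?U') c"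
  proof (rule Z2_coboundary1_open_partition[where \<P> = "{?U, open_simplex M \<sigma>}"])
    show "?U' \<subseteq> topspace (realization_top M)"
      by (auto simp: realization_top_def)
    show "\<Union>{?U, open_simplex M \<sigma>} = ?U'"
      using realization_diff_remove[OF M H H' \<sigma>(1)] by simp
    have "open_simplex M \<sigma> \<inter> ?U = {}"
      using realization_diff_iff[OF M H] \<sigma>(1) by (auto simp: open_simplex_def)
    then show "P \<inter> Q = {}" if "P \<in> {?U, open_simplex M \<sigma>}" "Q \<in> {?U, open_simplex M \<sigma>}" "P \<noteq> Q" for P Q
      using that by blast
    show "Z2_coboundary1 (subtopology (realization_top M) P) c" if "P \<in> {?U, open_simplex M \<sigma>}" for P
      using that cob Z2_coboundary1_open_simplex[OF M c] by blast
    have "open_simplex M \<sigma> \<subseteq> ?U'"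
      using realization_diff_remove[OF M H H' \<sigma>(1)] by blast
    then have "openin (subtopology (realization_top M) ?U') (open_simplex M \<sigma>)"
      using maximal HM \<sigma>(1) by (intro openin_open_simplex[OF M]) auto
    then show "openin (subtopology (realization_top M) ?U') P" if "P \<in> {?U, open_simplex M \<sigma>}" for P
      using that openin_realization_diff_remove[OF M H H' \<sigma>(1)] by blast
  qed
  then show ?thesis
    using H' HM H_dim unfolding cut_admissible_def subcomplex_def restricts_to_zero_def by auto
qed

lemma cut_le_card:
  "cut_admissible M n c H \<Longrightarrow> cut M n c \<le> card (simplices_of_dim H (n - 1))"
  unfolding cut_def by (rule Least_le) blast

lemma cut_attained:
  assumes "cut_admissible M n c H\<^sub>0"
  obtains H where "cut_admissible M n c H" "card (simplices_of_dim H (n - 1)) = cut M n c"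
proof -
  have "\<exists>H. cut_admissible M n c H \<and> cut M n c = card (simplices_of_dim H (n - 1))"
    unfolding cut_def by (rule LeastI_ex) (use assms in blast)
  then show ?thesis
    using that by auto
qed

lemma minimal_cut_faces_in_top_simplices:
  assumes fM: "finite M" and M: "simplicial_complex M" and dim: "sc_dim M n"
    and c: "Z2_cocycle1 (realization_top M) c"
    and adm: "cut_admissible M n c H" and min: "card (simplices_of_dim H (n - 1)) = cut M n c"
    and s: "s \<in> simplices_of_dim H (n - 1)"
  shows "\<exists>t\<in>simplices_of_dim M n. s \<subseteq> t"
proof (rule ccontr)
  assume free: "\<not> (\<exists>t\<in>simplices_of_dim M n. s \<subseteq> t)"
  have "H \<subseteq> M" "\<forall>s\<in>H. card s \<le> n"
    using adm unfolding cut_admissible_def subcomplex_def by auto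
  with s have "s \<in> H" "card s = n"
    by (auto simp: simplices_of_dim_def)
  then have "cut_admissible M n c (H - {s})"
    using cut_admissible_remove_free_face[OF M dim c adm _ _ free] by blast
  moreover have "simplices_of_dim (H - {s}) (n - 1) = simplices_of_dim H (n - 1) - {s}"
    by (auto simp: simplices_of_dim_def)
  ultimately have "cut M n c \<le> card (simplices_of_dim H (n - 1) - {s})"
    using cut_le_card[of M n c "H - {s}"] by simp
  moreover have "finite (simplices_of_dim H (n - 1))"
    using fM \<open>H \<subseteq> M\<close> by (auto simp: simplices_of_dim_def intro: finite_subset)
  ultimately show False
    using min s card_Diff1_less[of "simplices_of_dim H (n - 1)" s] by linarith
qed

lemma card_le_faces_of_top_simplices:
  assumes fM: "finite M" and M: "simplicial_complex M"
    and S: "\<And>s. s \<in> S \<Longrightarrow> card s = n \<and> (\<exists>t\<in>simplices_of_dim M n. s \<subseteq> t)"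
  shows "card S \<le> (n + 1) * Vol M n"
proof -
  define faces where "faces t = {s. s \<subseteq> t \<and> card s = n}" for t :: "'a set"
  have fin: "finite (simplices_of_dim M n)"
    using fM by (simp add: simplices_of_dim_def)
  have t: "finite t" "card t = n + 1" if "t \<in> simplices_of_dim M n" for t
    using that M by (auto simp: simplices_of_dim_def simplicial_complex_def)
  have "S \<subseteq> (\<Union>t\<in>simplices_of_dim M n. faces t)"
    using S unfolding faces_def by blast
  moreover have "finite (faces t)" if "t \<in> simplices_of_dim M n" for t
    using t[OF that] unfolding faces_def by (simp add: finite_subset[of _ "Pow t"] subset_iff)
  ultimately have "card S \<le> card (\<Union>t\<in>simplices_of_dim M n. faces t)"
    using fin by (intro card_mono) auto
  also have "\<dots> \<le> (\<Sum>t\<in>simplices_of_dim M n. card (faces t))"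
    using fin by (rule card_UN_le)
  also have "\<dots> = (\<Sum>t\<in>simplices_of_dim M n. n + 1)"
    using t unfolding faces_def by (simp add: n_subsets)
  also have "\<dots> = (n + 1) * Vol M n"
    by (simp add: Vol_def)
  finally show ?thesis .
qed

theorem mainTheorem7:
  fixes M :: "'v set set" and n :: nat
    and c :: "((nat \<Rightarrow> real) \<Rightarrow> ('v \<Rightarrow> real)) \<Rightarrow> bool"
  assumes "finite_simplicial_complex M"
    and "sc_dim M n"
    and "Z2_cocycle1 (realization_top M) c"
    and "\<not> Z2_coboundary1 (realization_top M) c"
  shows "cut M n c \<le> (n + 1) * Vol M n
    \<and> (\<forall>H. cut_admissible M n c H \<and> card (simplices_of_dim H (n - 1)) = cut M n c \<longrightarrow>
          (\<forall>s\<in>simplices_of_dim H (n - 1). \<exists>t\<in>simplices_of_dim M n. s \<subseteq> t))"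
proof -
  have fM: "finite M" and M: "simplicial_complex M"
    using assms(1) by (auto simp: finite_simplicial_complex_def)
  note faces_in_top = minimal_cut_faces_in_top_simplices[OF fM M assms(2,3)]
  obtain H where H: "cut_admissible M n c H" "card (simplices_of_dim H (n - 1)) = cut M n c"
    using cut_attained[OF cut_admissible_skeleton[OF M assms(2,3)]] .
  have "card s = n" if "s \<in> simplices_of_dim H (n - 1)" for s
    using that H(1) unfolding cut_admissible_def simplices_of_dim_def by force
  then have "card (simplices_of_dim H (n - 1)) \<le> (n + 1) * Vol M n"
    using faces_in_top[OF H] by (intro card_le_faces_of_top_simplices[OF fM M]) simp
  then show ?thesis
    using H(2) faces_in_top by (intro conjI allI impI ballI) auto
qed

end
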